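(* Let $\mathcal{P}=(\mathcal{R},\mathcal{F},\mathcal{D},\mathcal{B})$ be a ground Capacity Logic Program, let $W^{\mathcal{D}}_{\mathcal{P}}$ be its set of belief worlds and $\xi^{\mathcal{B}}:\mathbb{P}(W^{\mathcal{D}}_{\mathcal{P}})\to\mathbb{R}^2$ the capacity for sets of belief worlds. Then both $$(W^{\mathcal{D}}_{\mathcal{P}},\ \mathbb{P}(W^{\mathcal{D}}_{\mathcal{P}}),\ \mathrm{proj}_B\circ\xi^{\mathcal{B}})\quad\text{and}\quad (W^{\mathcal{D}}_{\mathcal{P}},\ \mathbb{P}(W^{\mathcal{D}}_{\mathcal{P}}),\ \mathrm{proj}_P\circ\xi^{\mathcal{B}})$$ are normalized capacity spaces; i.e. each of $\mathrm{proj}_B\circ\xi^{\mathcal{B}}$ and $\mathrm{proj}_P\circ\xi^{\mathcal{B}}$ is a capacity on $\mathbb{P}(W^{\mathcal{D}}_{\mathcal{P}})$ and takes the value $1$ on $W^{\mathcal{D}}_{\mathcal{P}}$.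
   Context: All sets are finite; there are no function symbols. Capacity: for a finite nonempty set $X$, a capacity is a function $\xi:\mathbb{P}(X)\to[0,1]$ with $\xi(\emptyset)=0$ and $A\subseteq B\Rightarrow \xi(A)\le\xi(B)$; it is normalized if $\xi(X)=1$. A (normalized) capacity space is a triple $(X,\mathbb{P}(X),\xi)$ with $\xi$ a (normalized) capacity. Belief domains: a belief domain $D$ has a finite nonempty frame of discernment $X_D$ and a mass function $\mathit{mass}(D,\cdot):\mathbb{P}(X_D)\to\mathbb{R}$ with $\mathit{mass}(D,\emptyset)=0$, $\mathit{mass}(D,A)\ge 0$ for all $A$, and $\sum_{A\subseteq X_D}\mathit{mass}(D,A)=1$. For $A\subseteq X_D$: $\mathit{Belief}(D,A)=\sum_{B\subseteq A}\mathit{mass}(D,B)$ and $\mathit{Plaus}(D,A)=1-\mathit{Belief}(D,X_D\setminus A)$. Subsets of $X_D$ are called belief events of $D$. Capacity Logic Program (CaLP): a tuple $\mathcal{P}=(\mathcal{R},\mathcal{F},\mathcal{D},\mathcal{B})$ where $\mathcal{R}$ is a finite set of ground rules, $\mathcal{F}$ is a finite set of ground probabilistic facts $p::f$ ($p\in[0,1]$, $f$ a ground atom), $\mathcal{D}$ is a finite set of belief domains, and $\mathcal{B}$ is the set of all ground belief facts $\mathit{belief}(D,B)$ with $D\in\mathcal{D}$ and $B\subseteq X_D$. A negated belief fact $\neg\,\mathit{belief}(D,B)$ is identified with $\mathit{belief}(D,X_D\setminus B)$, written $\mathit{belief}(D,\neg B)$. Canonicalization: for a set $Bel$ of belief facts,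 $\mathrm{doms}(Bel)$ is the set of domains occurring in it, and $\mathrm{canon}(Bel)=\{\mathit{belief}(D,\bigcap_{\mathit{belief}(D,B_i)\in Bel}B_i)\mid D\in\mathrm{doms}(Bel)\}$. $Bel$ is consistent if $\mathrm{canon}(Bel)$ contains no fact whose event is $\emptyset$. Belief worlds: a belief world of $\mathcal{P}$ is a tuple $w=(\mathcal{R},\mathcal{F}',\mathcal{D},\mathcal{B}')$ with $\mathcal{F}'\subseteq\mathcal{F}$ and $\mathcal{B}'\subseteq\mathcal{B}$ a consistent, canonical ($\mathrm{canon}(\mathcal{B}')=\mathcal{B}'$) set containing a belief fact for every domain in $\mathcal{D}$ (hence exactly one per domain). $W^{\mathcal{D}}_{\mathcal{P}}$ is the set of all belief worlds. Interval arithmetic: for nonnegative intervals, $[a,b]\,\widehat{\times}\,[c,d]=[ac,bd]$ and $[a,b]\,\widehat{+}\,[c,d]=[a+c,b+d]$; $\widehat{\prod}$ and $\widehat{\sum}$ are the iterated versions. Intervals are identified with elements of $\mathbb{R}^2$; $\mathrm{proj}_B([a,b])=a$ and $\mathrm{proj}_P([a,b])=b$. $\beta_{prb}$: for $\mathcal{F}'\subseteq\mathcal{F}$, $\beta_{prb}(\mathcal{F}')=\widehat{\prod}_{p::a\in\mathcal{F},\,a\in\mathcal{F}'}[p,p]\ \widehat{\times}\ \widehat{\prod}_{p::a\in\mathcal{F},\,a\notin\mathcal{F}'}[1-p,1-p]$. Upper belief domain probability: for a set $S$ of belief facts and a domain $D$, $BP^{\uparrow}(D,S)=[1,1]$ if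 $S$ contains no belief fact of domain $D$, and otherwise $BP^{\uparrow}(D,S)=[\mathit{Belief}(D,\bigcup B_i),\mathit{Plaus}(D,\bigcup B_i)]$ where the union ranges over all $B_i$ with $\mathit{belief}(D,B_i)\in S$. Capacity of sets of belief worlds: for $\mathcal{S}\subseteq W^{\mathcal{D}}_{\mathcal{P}}$, its domain partition $\mathrm{DomPrtn}(\mathcal{S})$ is the coarsest partition of $\mathcal{S}$ such that all worlds in a cell $S_i$ have the same set of probabilistic facts, denoted $\mathrm{probfacts}(S_i)$. For a cell $S_i$, $\beta_{prtn}(S_i)=\beta_{prb}(\mathrm{probfacts}(S_i))\ \widehat{\times}\ \widehat{\prod}_{D\in\mathcal{D}}BP^{\uparrow}\big(D,\bigcup_{(\mathcal{R},\mathcal{F}',\mathcal{D},\mathcal{B}')\in S_i}\mathcal{B}'\big)$ (so for each domain the belief events of that domain occurring in worlds of the cell are unioned), and $\xi^{\mathcal{B}}(\mathcal{S})=\widehat{\sum}_{S_i\in\mathrm{DomPrtn}(\mathcal{S})}\beta_{prtn}(S_i)$. *)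

theory Defs
  imports Complex_Main
begin

definition capacity :: "'w set \<Rightarrow> ('w set \<Rightarrow> real) \<Rightarrow> bool" where
  "capacity X \<xi> \<longleftrightarrow> finite X \<and> X \<noteq> {} \<and>
     (\<forall>A \<in> Pow X. 0 \<le> \<xi> A \<and> \<xi> A \<le> 1) \<and> \<xi> {} = 0 \<and>
     (\<forall>A B. A \<subseteq> B \<and> B \<subseteq> X \<longrightarrow> \<xi> A \<le> \<xi> B)"

definition normalized_capacity :: "'w set \<Rightarrow> ('w set \<Rightarrow> real) \<Rightarrow> bool" where
  "normalized_capacity X \<xi> \<longleftrightarrow> capacity X \<xi> \<and> \<xi> X = 1"

definition normalized_capacity_space :: "'w set \<Rightarrow> 'w set set \<Rightarrow> ('w set \<Rightarrow> real) \<Rightarrow> bool" where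
  "normalized_capacity_space X \<Sigma> \<xi> \<longleftrightarrow> \<Sigma> = Pow X \<and> normalized_capacity X \<xi>"

definition belief_domain :: "'x set \<Rightarrow> ('x set \<Rightarrow> real) \<Rightarrow> bool" where
  "belief_domain XD m \<longleftrightarrow> finite XD \<and> XD \<noteq> {} \<and> m {} = 0 \<and>
     (\<forall>A \<in> Pow XD. m A \<ge> 0) \<and> (\<Sum>A \<in> Pow XD. m A) = 1"

definition Belief :: "('x set \<Rightarrow> real) \<Rightarrow> 'x set \<Rightarrow> real" where
  "Belief m A = (\<Sum>B \<in> Pow A. m B)"

definition Plaus :: "'x set \<Rightarrow> ('x set \<Rightarrow> real) \<Rightarrow> 'x set \<Rightarrow> real" where
  "Plaus XD m A = 1 - Belief m (XD - A)"

text \<open>Probabilistic facts p::f are pairs (p, f); belief facts belief(D,B) are pairs (D, B).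
  A program is given by rules R, probabilistic facts F, domains Ds with frames X and masses mass.\<close>

definition calp :: "'r set \<Rightarrow> (real \<times> 'a) set \<Rightarrow> 'd set \<Rightarrow> ('d \<Rightarrow> 'x set)
    \<Rightarrow> ('d \<Rightarrow> 'x set \<Rightarrow> real) \<Rightarrow> bool" where
  "calp R F Ds X mass \<longleftrightarrow> finite R \<and> finite F \<and> (\<forall>(p, f) \<in> F. 0 \<le> p \<and> p \<le> 1) \<and>
     finite Ds \<and> (\<forall>D \<in> Ds. belief_domain (X D) (mass D))"

definition belief_facts :: "'d set \<Rightarrow> ('d \<Rightarrow> 'x set) \<Rightarrow> ('d \<times> 'x set) set" where
  "belief_facts Ds X = {(D, B). D \<in> Ds \<and> B \<subseteq> X D}"

definition doms :: "('d \<times> 'x set) set \<Rightarrow> 'd set" where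
  "doms Bel = fst ` Bel"

definition canon :: "('d \<times> 'x set) set \<Rightarrow> ('d \<times> 'x set) set" where
  "canon Bel = {(D, \<Inter>{B. (D, B) \<in> Bel}) | D. D \<in> doms Bel}"

definition consistent :: "('d \<times> 'x set) set \<Rightarrow> bool" where
  "consistent Bel \<longleftrightarrow> (\<forall>D. (D, {}) \<notin> canon Bel)"

type_synonym ('r, 'a, 'd, 'x) world =
  "'r set \<times> (real \<times> 'a) set \<times> 'd set \<times> ('d \<times> 'x set) set"

definition worlds :: "'r set \<Rightarrow> (real \<times> 'a) set \<Rightarrow> 'd set \<Rightarrow> ('d \<Rightarrow> 'x set)
    \<Rightarrow> ('r, 'a, 'd, 'x) world set" where
  "worlds R F Ds X = {(R, F', Ds, B') | F' B'. F' \<subseteq> F \<and> B' \<subseteq> belief_facts Ds X \<and>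
      consistent B' \<and> canon B' = B' \<and> (\<forall>D \<in> Ds. \<exists>B. (D, B) \<in> B')}"

definition wfacts :: "('r, 'a, 'd, 'x) world \<Rightarrow> (real \<times> 'a) set" where
  "wfacts w = fst (snd w)"

definition wbeliefs :: "('r, 'a, 'd, 'x) world \<Rightarrow> ('d \<times> 'x set) set" where
  "wbeliefs w = snd (snd (snd w))"

definition ivl_mult :: "real \<times> real \<Rightarrow> real \<times> real \<Rightarrow> real \<times> real" where
  "ivl_mult u v = (fst u * fst v, snd u * snd v)"

definition ivl_prod :: "('i \<Rightarrow> real \<times> real) \<Rightarrow> 'i set \<Rightarrow> real \<times> real" where
  "ivl_prod f S = ((\<Prod>i\<in>S. fst (f i)), (\<Prod>i\<in>S. snd (f i)))"

definition ivl_sum :: "('i \<Rightarrow> real \<times> real) \<Rightarrow> 'i set \<Rightarrow> real \<times> real" where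
  "ivl_sum f S = ((\<Sum>i\<in>S. fst (f i)), (\<Sum>i\<in>S. snd (f i)))"

definition proj_B :: "real \<times> real \<Rightarrow> real" where "proj_B u = fst u"
definition proj_P :: "real \<times> real \<Rightarrow> real" where "proj_P u = snd u"

definition beta_prb :: "(real \<times> 'a) set \<Rightarrow> (real \<times> 'a) set \<Rightarrow> real \<times> real" where
  "beta_prb F F' = ivl_mult
     (ivl_prod (\<lambda>(p, a). (p, p)) {(p, a) \<in> F. (p, a) \<in> F'})
     (ivl_prod (\<lambda>(p, a). (1 - p, 1 - p)) {(p, a) \<in> F. (p, a) \<notin> F'})"

definition BP_up :: "('d \<Rightarrow> 'x set) \<Rightarrow> ('d \<Rightarrow> 'x set \<Rightarrow> real) \<Rightarrow> 'd
    \<Rightarrow> ('d \<times> 'x set) set \<Rightarrow> real \<times> real" where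
  "BP_up X mass D S =
     (if \<not> (\<exists>B. (D, B) \<in> S) then (1, 1)
      else (let U = \<Union>{B. (D, B) \<in> S} in (Belief (mass D) U, Plaus (X D) (mass D) U)))"

definition DomPrtn :: "('r, 'a, 'd, 'x) world set \<Rightarrow> ('r, 'a, 'd, 'x) world set set" where
  "DomPrtn S = (\<lambda>F'. {w \<in> S. wfacts w = F'}) ` (wfacts ` S)"

definition cell_probfacts :: "('r, 'a, 'd, 'x) world set \<Rightarrow> (real \<times> 'a) set" where
  "cell_probfacts C = (THE F'. \<forall>w \<in> C. wfacts w = F')"

definition beta_prtn :: "(real \<times> 'a) set \<Rightarrow> 'd set \<Rightarrow> ('d \<Rightarrow> 'x set)
    \<Rightarrow> ('d \<Rightarrow> 'x set \<Rightarrow> real) \<Rightarrow> ('r, 'a, 'd, 'x) world set \<Rightarrow> real \<times> real" where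
  "beta_prtn F Ds X mass C = ivl_mult (beta_prb F (cell_probfacts C))
     (ivl_prod (\<lambda>D. BP_up X mass D (\<Union>w \<in> C. wbeliefs w)) Ds)"

definition xiB :: "(real \<times> 'a) set \<Rightarrow> 'd set \<Rightarrow> ('d \<Rightarrow> 'x set)
    \<Rightarrow> ('d \<Rightarrow> 'x set \<Rightarrow> real) \<Rightarrow> ('r, 'a, 'd, 'x) world set \<Rightarrow> real \<times> real" where
  "xiB F Ds X mass S = ivl_sum (beta_prtn F Ds X mass) (DomPrtn S)"

end

theory Submission
  imports Defs
begin

text \<open>
  \<open>\<xi>\<^sup>B(S)\<close> is a sum, over the probabilistic-fact sets \<open>F'\<close> occurring in \<open>S\<close>, of the nonnegative
  weight \<open>\<beta>\<^sub>p\<^sub>r\<^sub>b(F')\<close> times a product over domains of the belief (resp. plausibility) of the union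
  of the events believed in the worlds of that cell. Enlarging \<open>S\<close> adds cells and enlarges these
  unions, and belief and plausibility are monotone, so both endpoints are monotone; they vanish on
  the empty set. On the set of all worlds every cell contains the world believing the whole frame
  of each domain, so every domain factor is \<open>1\<close> and the weights add up to
  \<open>\<Prod>(p + (1 - p)) = 1\<close>.
\<close>

lemma ivl_mult_endpoint: "sel \<in> {fst, snd} \<Longrightarrow> sel (ivl_mult u v) = sel u * sel v"
  by (auto simp: ivl_mult_def)

lemma ivl_prod_endpoint: "sel \<in> {fst, snd} \<Longrightarrow> sel (ivl_prod f S) = (\<Prod>i\<in>S. sel (f i))"
  by (auto simp: ivl_prod_def)

lemma ivl_sum_endpoint: "sel \<in> {fst, snd} \<Longrightarrow> sel (ivl_sum f S) = (\<Sum>i\<in>S. sel (f i))"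
  by (auto simp: ivl_sum_def)

lemma proj_B_eq_fst: "proj_B = fst"
  by (rule ext) (simp add: proj_B_def)

lemma proj_P_eq_snd: "proj_P = snd"
  by (rule ext) (simp add: proj_P_def)

lemma Belief_mono:
  assumes "belief_domain XD m" "A \<subseteq> B" "B \<subseteq> XD"
  shows "Belief m A \<le> Belief m B"
proof -
  have "finite (Pow B)" using assms finite_subset by (auto simp: belief_domain_def)
  then show ?thesis unfolding Belief_def
    by (rule sum_mono2) (use assms in \<open>auto simp: belief_domain_def\<close>)
qed

lemma Belief_nonneg: "belief_domain XD m \<Longrightarrow> A \<subseteq> XD \<Longrightarrow> 0 \<le> Belief m A"
  unfolding Belief_def by (auto simp: belief_domain_def intro!: sum_nonneg)

lemma Belief_frame: "belief_domain XD m \<Longrightarrow> Belief m XD = 1"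
  by (simp add: belief_domain_def Belief_def)

lemma Plaus_mono:
  "belief_domain XD m \<Longrightarrow> A \<subseteq> B \<Longrightarrow> Plaus XD m A \<le> Plaus XD m B"
  unfolding Plaus_def using Belief_mono[of XD m "XD - B" "XD - A"] by auto

lemma Plaus_nonneg: "belief_domain XD m \<Longrightarrow> 0 \<le> Plaus XD m A"
  unfolding Plaus_def using Belief_mono[of XD m "XD - A" XD] Belief_frame by fastforce

lemma Plaus_frame: "belief_domain XD m \<Longrightarrow> Plaus XD m XD = 1"
  by (simp add: Plaus_def Belief_def belief_domain_def)

lemma BP_up_eq:
  "(D, B) \<in> S \<Longrightarrow> BP_up X mass D S =
     (Belief (mass D) (\<Union>{B. (D, B) \<in> S}), Plaus (X D) (mass D) (\<Union>{B. (D, B) \<in> S}))"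
  unfolding BP_up_def Let_def by auto

lemma BP_up_nonneg_mono:
  assumes bd: "belief_domain (X D) (mass D)" and sel: "sel \<in> {fst, snd}"
    and "(D, B) \<in> S" and "S \<subseteq> T" and frame: "\<And>B. (D, B) \<in> T \<Longrightarrow> B \<subseteq> X D"
  shows "0 \<le> sel (BP_up X mass D S) \<and> sel (BP_up X mass D S) \<le> sel (BP_up X mass D T)"
proof -
  define U where "U = \<Union>{B. (D, B) \<in> S}"
  define V where "V = \<Union>{B. (D, B) \<in> T}"
  have "U \<subseteq> V" "V \<subseteq> X D"
    using \<open>S \<subseteq> T\<close> frame unfolding U_def V_def by blast+
  moreover have "BP_up X mass D S = (Belief (mass D) U, Plaus (X D) (mass D) U)"
    "BP_up X mass D T = (Belief (mass D) V, Plaus (X D) (mass D) V)"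
    using assms BP_up_eq[of D B] unfolding U_def V_def by blast+
  ultimately show ?thesis
    using sel Belief_nonneg[OF bd] Belief_mono[OF bd] Plaus_nonneg[OF bd] Plaus_mono[OF bd]
    by auto
qed

lemma BP_up_frame:
  assumes "belief_domain (X D) (mass D)" "\<Union>{B. (D, B) \<in> S} = X D" "(D, B) \<in> S"
  shows "BP_up X mass D S = (1, 1)"
  using assms by (simp add: BP_up_eq Belief_frame Plaus_frame)

lemma calp_prob_bounds: "calp R F Ds X mass \<Longrightarrow> x \<in> F \<Longrightarrow> 0 \<le> fst x \<and> fst x \<le> 1"
  unfolding calp_def by auto

lemma beta_prb_nonneg:
  assumes "\<And>x. x \<in> F \<Longrightarrow> 0 \<le> fst x \<and> fst x \<le> 1" "sel \<in> {fst, snd}"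
  shows "0 \<le> sel (beta_prb F F')"
  using assms unfolding beta_prb_def ivl_mult_def ivl_prod_def
  by (auto simp: split_def intro!: prod_nonneg mult_nonneg_nonneg)

lemma beta_prb_endpoint:
  assumes "F' \<subseteq> F" "sel \<in> {fst, snd}"
  shows "sel (beta_prb F F') = (\<Prod>x\<in>F'. fst x) * (\<Prod>x\<in>F - F'. 1 - fst x)"
proof -
  have "{(p, a) \<in> F. (p, a) \<in> F'} = F'" "{(p, a) \<in> F. (p, a) \<notin> F'} = F - F'"
    using assms(1) by auto
  then show ?thesis
    using assms(2)
    unfolding beta_prb_def ivl_mult_endpoint[OF assms(2)] ivl_prod_endpoint[OF assms(2)]
    by (auto intro!: arg_cong2[where f = "(*)"] prod.cong)
qed

lemma sum_beta_prb_Pow: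
  assumes "finite F" "sel \<in> {fst, snd}"
  shows "(\<Sum>F'\<in>Pow F. sel (beta_prb F F')) = 1"
proof -
  have "(\<Sum>F'\<in>Pow F. sel (beta_prb F F')) =
      (\<Sum>F'\<in>Pow F. (\<Prod>x\<in>F'. fst x) * (\<Prod>x\<in>F - F'. 1 - fst x))"
    using assms(2) by (intro sum.cong) (auto simp: beta_prb_endpoint)
  also have "\<dots> = (\<Prod>x\<in>F. fst x + (1 - fst x))"
    by (rule prod_add[OF assms(1), symmetric])
  finally show ?thesis by simp
qed

lemma worlds_wfacts: "w \<in> worlds R F Ds X \<Longrightarrow> wfacts w \<subseteq> F"
  by (auto simp: worlds_def wfacts_def)

lemma worlds_belief_exists: "w \<in> worlds R F Ds X \<Longrightarrow> D \<in> Ds \<Longrightarrow> \<exists>B. (D, B) \<in> wbeliefs w"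
  by (auto simp: worlds_def wbeliefs_def)

lemma worlds_belief_in_frame: "w \<in> worlds R F Ds X \<Longrightarrow> (D, B) \<in> wbeliefs w \<Longrightarrow> B \<subseteq> X D"
  by (auto simp: worlds_def wbeliefs_def belief_facts_def)

lemma finite_belief_facts:
  "finite Ds \<Longrightarrow> (\<And>D. D \<in> Ds \<Longrightarrow> finite (X D)) \<Longrightarrow> finite (belief_facts Ds X)"
  by (rule finite_subset[of _ "Sigma Ds (\<lambda>D. Pow (X D))"]) (auto simp: belief_facts_def)

lemma finite_worlds:
  assumes "calp R F Ds X mass"
  shows "finite (worlds R F Ds X)"
proof (rule finite_subset)
  show "worlds R F Ds X \<subseteq> (\<lambda>(F', B'). (R, F', Ds, B')) ` (Pow F \<times> Pow (belief_facts Ds X))"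
    by (auto simp: worlds_def)
  have "finite (belief_facts Ds X)"
    using assms by (intro finite_belief_facts) (auto simp: calp_def belief_domain_def)
  then show "finite ((\<lambda>(F', B'). (R, F', Ds, B')) ` (Pow F \<times> Pow (belief_facts Ds X)))"
    using assms by (simp add: calp_def)
qed

lemma frame_world_in_worlds:
  assumes "calp R F Ds X mass" "F' \<subseteq> F"
  shows "(R, F', Ds, (\<lambda>D. (D, X D)) ` Ds) \<in> worlds R F Ds X"
proof -
  let ?B = "(\<lambda>D. (D, X D)) ` Ds"
  have "\<Inter>{B. (D, B) \<in> ?B} = X D" if "D \<in> Ds" for D
    using that by auto
  then have canon: "canon ?B = ?B"
    unfolding canon_def doms_def by (auto simp: image_image)
  have "consistent ?B"
    using assms(1) unfolding consistent_def canon by (auto simp: calp_def belief_domain_def)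
  moreover have "?B \<subseteq> belief_facts Ds X"
    by (auto simp: belief_facts_def)
  ultimately show ?thesis
    using assms(2) canon unfolding worlds_def by blast
qed

lemma wfacts_worlds:
  assumes "calp R F Ds X mass"
  shows "wfacts ` worlds R F Ds X = Pow F"
proof
  show "wfacts ` worlds R F Ds X \<subseteq> Pow F"
    using worlds_wfacts by blast
  show "Pow F \<subseteq> wfacts ` worlds R F Ds X"
  proof
    fix F' assume "F' \<in> Pow F"
    then have "(R, F', Ds, (\<lambda>D. (D, X D)) ` Ds) \<in> worlds R F Ds X"
      using frame_world_in_worlds[OF assms] by blast
    then show "F' \<in> wfacts ` worlds R F Ds X"
      by (rule rev_image_eqI) (simp add: wfacts_def)
  qed
qed

abbreviation fact_cell ::
    "('r, 'a, 'd, 'x) world set \<Rightarrow> (real \<times> 'a) set \<Rightarrow> ('r, 'a, 'd, 'x) world set"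
  where "fact_cell S F' \<equiv> {w \<in> S. wfacts w = F'}"

abbreviation cell_beliefs ::
    "('r, 'a, 'd, 'x) world set \<Rightarrow> (real \<times> 'a) set \<Rightarrow> ('d \<times> 'x set) set"
  where "cell_beliefs S F' \<equiv> \<Union>w \<in> fact_cell S F'. wbeliefs w"

lemma sum_DomPrtn: "(\<Sum>C\<in>DomPrtn S. h C) = (\<Sum>F'\<in>wfacts ` S. h (fact_cell S F'))"
proof -
  have "inj_on (fact_cell S) (wfacts ` S)"
  proof (rule inj_onI)
    fix F' G assume "F' \<in> wfacts ` S" and eq: "fact_cell S F' = fact_cell S G"
    then obtain w where "w \<in> fact_cell S F'" by blast
    then show "F' = G" using eq by blast
  qed
  then show ?thesis unfolding DomPrtn_def by (simp add: sum.reindex)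
qed

lemma cell_probfacts_fact_cell:
  assumes "F' \<in> wfacts ` S"
  shows "cell_probfacts (fact_cell S F') = F'"
  unfolding cell_probfacts_def
proof (rule the_equality)
  show "\<forall>w \<in> fact_cell S F'. wfacts w = F'" by blast
  obtain w where "w \<in> fact_cell S F'" using assms by blast
  then show "G = F'" if "\<forall>w \<in> fact_cell S F'. wfacts w = G" for G
    using that by blast
qed

lemma xiB_endpoint:
  assumes sel: "sel \<in> {fst, snd}"
  shows "sel (xiB F Ds X mass S) = (\<Sum>F'\<in>wfacts ` S.
    sel (beta_prb F F') * (\<Prod>D\<in>Ds. sel (BP_up X mass D (cell_beliefs S F'))))"
proof -
  have "sel (xiB F Ds X mass S) =
      (\<Sum>F'\<in>wfacts ` S. sel (beta_prtn F Ds X mass (fact_cell S F')))"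
    unfolding xiB_def ivl_sum_endpoint[OF sel] by (rule sum_DomPrtn)
  also have "\<dots> = (\<Sum>F'\<in>wfacts ` S. sel (beta_prb F F') *
      (\<Prod>D\<in>Ds. sel (BP_up X mass D (cell_beliefs S F'))))"
    by (rule sum.cong) (simp_all only: beta_prtn_def ivl_mult_endpoint[OF sel]
      ivl_prod_endpoint[OF sel] cell_probfacts_fact_cell)
  finally show ?thesis .
qed

lemma xiB_empty: "xiB F Ds X mass {} = (0, 0)"
  unfolding xiB_def ivl_sum_def DomPrtn_def by (simp only: image_empty sum.empty)

lemma cell_domain_factor_nonneg_mono:
  assumes calp: "calp R F Ds X mass" and sel: "sel \<in> {fst, snd}"
    and ST: "S \<subseteq> T" and TW: "T \<subseteq> worlds R F Ds X" and F': "F' \<in> wfacts ` S"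
  shows "0 \<le> (\<Prod>D\<in>Ds. sel (BP_up X mass D (cell_beliefs S F'))) \<and>
    (\<Prod>D\<in>Ds. sel (BP_up X mass D (cell_beliefs S F')))
      \<le> (\<Prod>D\<in>Ds. sel (BP_up X mass D (cell_beliefs T F')))"
proof -
  obtain w where w: "w \<in> fact_cell S F'" using F' by blast
  have "0 \<le> sel (BP_up X mass D (cell_beliefs S F')) \<and>
      sel (BP_up X mass D (cell_beliefs S F')) \<le> sel (BP_up X mass D (cell_beliefs T F'))"
    if D: "D \<in> Ds" for D
  proof -
    have "w \<in> worlds R F Ds X" using w ST TW by blast
    then obtain B where "(D, B) \<in> wbeliefs w"
      using worlds_belief_exists[OF _ D] by blast
    have "belief_domain (X D) (mass D)" using calp D by (simp add: calp_def)
    moreover have "(D, B) \<in> cell_beliefs S F'" using w \<open>(D, B) \<in> wbeliefs w\<close> by blast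
    moreover have "cell_beliefs S F' \<subseteq> cell_beliefs T F'" using ST by blast
    moreover have "B' \<subseteq> X D" if "(D, B') \<in> cell_beliefs T F'" for B'
    proof -
      from that obtain v where "v \<in> T" "(D, B') \<in> wbeliefs v" by blast
      then show ?thesis by (rule worlds_belief_in_frame[OF subsetD[OF TW]])
    qed
    ultimately show ?thesis by (rule BP_up_nonneg_mono[OF _ sel])
  qed
  then show ?thesis by (simp add: prod_nonneg prod_mono)
qed

lemma xiB_endpoint_mono:
  assumes calp: "calp R F Ds X mass" and sel: "sel \<in> {fst, snd}"
    and ST: "S \<subseteq> T" and TW: "T \<subseteq> worlds R F Ds X"
  shows "sel (xiB F Ds X mass S) \<le> sel (xiB F Ds X mass T)"
proof -
  let ?\<beta> = "\<lambda>F'. sel (beta_prb F F')"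
  let ?bp = "\<lambda>S F'. \<Prod>D\<in>Ds. sel (BP_up X mass D (cell_beliefs S F'))"
  have \<beta>_nonneg: "0 \<le> ?\<beta> F'" for F'
    using beta_prb_nonneg[OF calp_prob_bounds[OF calp] sel] .
  have "finite T" using finite_worlds[OF calp] TW finite_subset by blast
  have "sel (xiB F Ds X mass S) = (\<Sum>F'\<in>wfacts ` S. ?\<beta> F' * ?bp S F')"
    by (rule xiB_endpoint[OF sel])
  also have "\<dots> \<le> (\<Sum>F'\<in>wfacts ` S. ?\<beta> F' * ?bp T F')"
    using cell_domain_factor_nonneg_mono[OF calp sel ST TW] \<beta>_nonneg
    by (intro sum_mono mult_left_mono) auto
  also have "\<dots> \<le> (\<Sum>F'\<in>wfacts ` T. ?\<beta> F' * ?bp T F')"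
    using \<open>finite T\<close> ST cell_domain_factor_nonneg_mono[OF calp sel order_refl TW] \<beta>_nonneg
    by (intro sum_mono2) auto
  also have "\<dots> = sel (xiB F Ds X mass T)"
    by (rule xiB_endpoint[OF sel, symmetric])
  finally show ?thesis .
qed

lemma BP_up_worlds_cell:
  assumes calp: "calp R F Ds X mass" and "F' \<subseteq> F" "D \<in> Ds"
  shows "BP_up X mass D (cell_beliefs (worlds R F Ds X) F') = (1, 1)"
proof -
  let ?w = "(R, F', Ds, (\<lambda>D. (D, X D)) ` Ds)"
  have "?w \<in> fact_cell (worlds R F Ds X) F'"
    using frame_world_in_worlds[OF calp \<open>F' \<subseteq> F\<close>] by (simp add: wfacts_def)
  moreover have "(D, X D) \<in> wbeliefs ?w"
    using \<open>D \<in> Ds\<close> by (simp add: wbeliefs_def)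
  ultimately have frame_believed: "(D, X D) \<in> cell_beliefs (worlds R F Ds X) F'"
    by blast
  have "B \<subseteq> X D" if "(D, B) \<in> cell_beliefs (worlds R F Ds X) F'" for B
  proof -
    from that obtain v where "v \<in> worlds R F Ds X" "(D, B) \<in> wbeliefs v" by blast
    then show ?thesis by (rule worlds_belief_in_frame)
  qed
  then have "\<Union>{B. (D, B) \<in> cell_beliefs (worlds R F Ds X) F'} = X D"
    using frame_believed by blast
  moreover have "belief_domain (X D) (mass D)"
    using calp \<open>D \<in> Ds\<close> by (simp add: calp_def)
  ultimately show ?thesis
    using frame_believed by (intro BP_up_frame)
qed

lemma xiB_worlds_endpoint:
  assumes calp: "calp R F Ds X mass" and sel: "sel \<in> {fst, snd}"
  shows "sel (xiB F Ds X mass (worlds R F Ds X)) = 1"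
proof -
  have "sel (xiB F Ds X mass (worlds R F Ds X)) = (\<Sum>F'\<in>Pow F. sel (beta_prb F F'))"
    unfolding xiB_endpoint[OF sel] wfacts_worlds[OF calp]
    using sel by (intro sum.cong) (auto simp: BP_up_worlds_cell[OF calp])
  also have "\<dots> = 1"
    using calp sel by (simp add: calp_def sum_beta_prb_Pow)
  finally show ?thesis .
qed

lemma xiB_endpoint_normalized_capacity_space:
  assumes calp: "calp R F Ds X mass" and sel: "sel \<in> {fst, snd}"
  shows "normalized_capacity_space (worlds R F Ds X) (Pow (worlds R F Ds X))
    (sel \<circ> xiB F Ds X mass)"
proof -
  let ?W = "worlds R F Ds X"
  let ?\<xi> = "sel \<circ> xiB F Ds X mass"
  have mono: "?\<xi> A \<le> ?\<xi> B" if "A \<subseteq> B" "B \<subseteq> ?W" for A B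
    using xiB_endpoint_mono[OF calp sel that] by simp
  have empty: "?\<xi> {} = 0" using sel by (auto simp: xiB_empty)
  have full: "?\<xi> ?W = 1" using xiB_worlds_endpoint[OF calp sel] by simp
  have bounds: "0 \<le> ?\<xi> A \<and> ?\<xi> A \<le> 1" if "A \<in> Pow ?W" for A
  proof -
    have "A \<subseteq> ?W" using that by simp
    then show ?thesis
      using mono[OF empty_subsetI \<open>A \<subseteq> ?W\<close>] mono[OF \<open>A \<subseteq> ?W\<close> order_refl]
      unfolding empty full by simp
  qed
  have "?W \<noteq> {}" using frame_world_in_worlds[OF calp empty_subsetI] by blast
  then show ?thesis
    unfolding normalized_capacity_space_def normalized_capacity_def capacity_def
    using finite_worlds[OF calp] bounds mono empty full by blast
qed

theorem mainTheorem1: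
  fixes R :: "'r set" and F :: "(real \<times> 'a) set" and Ds :: "'d set"
    and X :: "'d \<Rightarrow> 'x set" and mass :: "'d \<Rightarrow> 'x set \<Rightarrow> real"
  assumes "calp R F Ds X mass"
  shows "normalized_capacity_space (worlds R F Ds X) (Pow (worlds R F Ds X))
            (proj_B \<circ> xiB F Ds X mass)
       \<and> normalized_capacity_space (worlds R F Ds X) (Pow (worlds R F Ds X))
            (proj_P \<circ> xiB F Ds X mass)"
  unfolding proj_B_eq_fst proj_P_eq_snd
  using xiB_endpoint_normalized_capacity_space[OF assms] by simp

end
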